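(* Let $n$ be a positive integer with $n \equiv 3 \pmod 6$ and \[n \notin \{9, 15, 21, 141, 153, 165, 177, 189, 231, 249, 261, 285, 351, 357\},\] and let $\rho$ be an integer with $1 \le \rho \le n/3$. Then there exists an $(n+\rho,4)$-packing with exactly $\rho n/3 + D(\rho,4)$ blocks in which the largest partial parallel class has size $\rho$.
   Context: For integers $v \ge k \ge 2$, a $(v,k)$-packing is a pair $(X,\mathcal{B})$ where $X$ is a set of $v$ points and $\mathcal{B}$ is a set of $k$-subsets of $X$ (blocks) such that every pair of distinct points lies in at most one block. For integers $m \ge 0$, $D(m,k)$ denotes the maximum number of $k$-subsets of an $m$-set such that every pair of points lies in at most one of them (so $D(m,k)=0$ if $m<k$). A partial parallel class (PPC) is a set of pairwise disjoint blocks; its size is the number of blocks in it. "The largest PPC has size $\rho$" means that the packing contains a PPC of size $\rho$ but no PPC of size $\rho+1$. *)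

theory Defs
  imports Main
begin

definition is_packing :: "nat \<Rightarrow> nat \<Rightarrow> 'a set \<Rightarrow> 'a set set \<Rightarrow> bool" where
  "is_packing v k X B \<longleftrightarrow>
     finite X \<and> card X = v \<and>
     (\<forall>b\<in>B. b \<subseteq> X \<and> card b = k) \<and>
     (\<forall>x\<in>X. \<forall>y\<in>X. x \<noteq> y \<longrightarrow> card {b\<in>B. x \<in> b \<and> y \<in> b} \<le> 1)"

definition D :: "nat \<Rightarrow> nat \<Rightarrow> nat" where
  "D m k = Max {card B | B. is_packing m k {0..<m::nat} B}"

definition is_PPC :: "'a set set \<Rightarrow> 'a set set \<Rightarrow> bool" where
  "is_PPC B P \<longleftrightarrow> P \<subseteq> B \<and> (\<forall>b\<in>P. \<forall>c\<in>P. b \<noteq> c \<longrightarrow> b \<inter> c = {})"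

definition largest_PPC_size :: "'a set set \<Rightarrow> nat \<Rightarrow> bool" where
  "largest_PPC_size B r \<longleftrightarrow>
     (\<exists>P. is_PPC B P \<and> finite P \<and> card P = r) \<and>
     \<not> (\<exists>P. is_PPC B P \<and> finite P \<and> card P = r + 1)"

end

theory Submission
  imports Defs "HOL-Library.Countable" "HOL-Algebra.Elementary_Groups"
begin

lemma is_packing_finite_blocks:
  assumes "is_packing v k X B"
  shows "finite B"
proof (rule finite_subset)
  show "B \<subseteq> Pow X" "finite (Pow X)"
    using assms by (auto simp: is_packing_def)
qed

lemma is_packing_pair_unique:
  assumes "is_packing v k X B" "b \<in> B" "b' \<in> B" "x \<noteq> y" "{x, y} \<subseteq> b" "{x, y} \<subseteq> b'"
  shows "b = b'"
proof -
  have "x \<in> X" "y \<in> X"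
    using assms(1,2,5) unfolding is_packing_def by auto
  then have "card {c \<in> B. x \<in> c \<and> y \<in> c} \<le> 1"
    using assms(1,4) unfolding is_packing_def by simp
  moreover have "b \<in> {c \<in> B. x \<in> c \<and> y \<in> c}" "b' \<in> {c \<in> B. x \<in> c \<and> y \<in> c}"
    using assms(2-6) by auto
  ultimately show ?thesis
    using is_packing_finite_blocks[OF assms(1)] card_le_Suc0_iff_eq[of "{c \<in> B. x \<in> c \<and> y \<in> c}"]
    by simp
qed

lemma is_packingI:
  assumes "finite X" "card X = v" "\<And>b. b \<in> B \<Longrightarrow> b \<subseteq> X" "\<And>b. b \<in> B \<Longrightarrow> card b = k"
    and "\<And>b b' x y. b \<in> B \<Longrightarrow> b' \<in> B \<Longrightarrow> x \<noteq> y \<Longrightarrow> {x, y} \<subseteq> b \<Longrightarrow> {x, y} \<subseteq> b' \<Longrightarrow> b = b'"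
  shows "is_packing v k X B"
proof -
  have "B \<subseteq> Pow X"
    using assms(3) by blast
  then have "finite B"
    using assms(1) finite_subset by blast
  then have "card {b \<in> B. x \<in> b \<and> y \<in> b} \<le> 1" if "x \<noteq> y" for x y
    using assms(5)[OF _ _ that] card_le_Suc0_iff_eq[of "{b \<in> B. x \<in> b \<and> y \<in> b}"] by simp
  then show ?thesis
    using assms unfolding is_packing_def by blast
qed

lemma is_packing_image:
  assumes "is_packing v k X B" "inj_on f X"
  shows "is_packing v k (f ` X) ((`) f ` B)"
proof (rule is_packingI)
  have sub: "b \<subseteq> X" if "b \<in> B" for b
    using assms(1) that by (simp add: is_packing_def)
  show "finite (f ` X)" "card (f ` X) = v"
    using assms by (auto simp: is_packing_def card_image)
  show "b \<subseteq> f ` X" if "b \<in> (`) f ` B" for b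
    using that sub by auto
  show "card b = k" if "b \<in> (`) f ` B" for b
    using that sub assms by (auto simp: is_packing_def card_image inj_on_subset)
  show "b = b'" if b: "b \<in> (`) f ` B" "b' \<in> (`) f ` B"
    and xy: "x \<noteq> y" "{x, y} \<subseteq> b" "{x, y} \<subseteq> b'" for b b' x y
  proof -
    obtain c c' where c: "c \<in> B" "b = f ` c" and c': "c' \<in> B" "b' = f ` c'"
      using b by blast
    obtain a a' where a: "a \<in> c" "a' \<in> c" "x = f a" "y = f a'"
      using xy(2) c(2) by auto
    have "{a, a'} \<subseteq> c'"
      using xy(3) c' a sub[OF c(1)] sub[OF c'(1)] inj_onD[OF assms(2)] by auto
    then have "c = c'"
      using is_packing_pair_unique[OF assms(1) c(1) c'(1), of a a'] a xy(1) by blast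
    then show "b = b'"
      using c c' by simp
  qed
qed

lemma card_PPC_le:
  assumes Q: "is_PPC B Q" and "finite Z" and meets: "\<And>b. b \<in> B \<Longrightarrow> b \<inter> Z \<noteq> {}"
  shows "card Q \<le> card Z"
proof -
  define pick where "pick b = (SOME z. z \<in> b \<inter> Z)" for b
  have pick: "pick b \<in> b \<inter> Z" if "b \<in> Q" for b
  proof -
    have "b \<inter> Z \<noteq> {}"
      using that Q meets unfolding is_PPC_def by blast
    then show ?thesis
      unfolding pick_def by (metis ex_in_conv someI)
  qed
  have "inj_on pick Q"
  proof (rule inj_onI)
    fix b b' assume "b \<in> Q" "b' \<in> Q" "pick b = pick b'"
    then have "b \<inter> b' \<noteq> {}"
      using pick by (metis IntD1 disjoint_iff)
    then show "b = b'"
      using Q \<open>b \<in> Q\<close> \<open>b' \<in> Q\<close> unfolding is_PPC_def by blast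
  qed
  moreover have "pick ` Q \<subseteq> Z"
    using pick by blast
  ultimately show ?thesis
    using card_inj_on_le \<open>finite Z\<close> by blast
qed

lemma largest_PPC_sizeI:
  assumes "is_PPC B Q" "finite Q" "card Q = card Z" "finite Z" "\<And>b. b \<in> B \<Longrightarrow> b \<inter> Z \<noteq> {}"
  shows "largest_PPC_size B (card Z)"
  using assms card_PPC_le[OF _ assms(4,5)] unfolding largest_PPC_size_def by fastforce

lemma D_attained: "\<exists>B. is_packing m k {0..<m} B \<and> card B = D m k"
proof -
  let ?S = "{card B | B. is_packing m k {0..<m::nat} B}"
  have "?S \<subseteq> card ` Pow (Pow {0..<m})"
    by (auto simp: is_packing_def)
  then have "finite ?S"
    by (rule finite_subset) simp
  moreover have "is_packing m k {0..<m} {}"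
    by (simp add: is_packing_def)
  then have "?S \<noteq> {}"
    by blast
  ultimately have "D m k \<in> ?S"
    unfolding D_def by (rule Max_in)
  then show ?thesis
    by auto
qed

locale resolvable_packing =
  fixes V :: "'p set" and I :: "'i set" and P :: "'i \<Rightarrow> 'p set set" and s :: "'i \<Rightarrow> 'p set"
  assumes finite_points: "finite V"
    and finite_classes: "finite I"
    and card_points: "card V = 3 * card I"
    and triple_subset: "i \<in> I \<Longrightarrow> T \<in> P i \<Longrightarrow> T \<subseteq> V"
    and card_triple: "i \<in> I \<Longrightarrow> T \<in> P i \<Longrightarrow> card T = 3"
    and class_disjoint: "i \<in> I \<Longrightarrow> T \<in> P i \<Longrightarrow> T' \<in> P i \<Longrightarrow> T \<inter> T' \<noteq> {} \<Longrightarrow> T = T'"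
    and class_covers: "i \<in> I \<Longrightarrow> \<Union>(P i) = V"
    and pair_unique: "i \<in> I \<Longrightarrow> j \<in> I \<Longrightarrow> T \<in> P i \<Longrightarrow> T' \<in> P j \<Longrightarrow> x \<noteq> y \<Longrightarrow>
      {x, y} \<subseteq> T \<Longrightarrow> {x, y} \<subseteq> T' \<Longrightarrow> i = j \<and> T = T'"
    and transversal_in_class: "i \<in> I \<Longrightarrow> s i \<in> P i"
    and transversal_disjoint: "i \<in> I \<Longrightarrow> j \<in> I \<Longrightarrow> i \<noteq> j \<Longrightarrow> s i \<inter> s j = {}"
begin

lemma finite_class: "i \<in> I \<Longrightarrow> finite (P i)"
  using triple_subset finite_points by (meson Pow_iff finite_Pow_iff finite_subset subsetI)

lemma card_class:
  assumes i: "i \<in> I"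
  shows "card (P i) = card I"
proof -
  have "card V = card (\<Union>(P i))"
    using class_covers[OF i] by simp
  also have "\<dots> = (\<Sum>T\<in>P i. card T)"
    using class_disjoint[OF i] card_triple[OF i] finite_class[OF i]
    by (intro card_Union_disjoint) (auto simp: pairwise_def disjnt_def card_ge_0_finite)
  also have "\<dots> = 3 * card (P i)"
    using card_triple[OF i] by simp
  finally show ?thesis
    using card_points by simp
qed

end

lemma resolvable_packing_transfer:
  assumes "resolvable_packing V I P s" and f: "inj_on f V" and e: "bij_betw e J I"
  shows "resolvable_packing (f ` V) J (\<lambda>k. (`) f ` P (e k)) (\<lambda>k. f ` s (e k))"
proof -
  interpret resolvable_packing V I P s by fact
  have eI: "e k \<in> I" if "k \<in> J" for k
    using e that by (auto simp: bij_betw_def)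
  have e_inj: "e k = e k' \<longleftrightarrow> k = k'" if "k \<in> J" "k' \<in> J" for k k'
    using e that by (auto dest: bij_betw_imp_inj_on inj_onD)
  have f_eq: "f a = f b \<longleftrightarrow> a = b" if "a \<in> A" "b \<in> B" "A \<in> P i" "B \<in> P j" "i \<in> I" "j \<in> I"
    for a b A B i j
    using that triple_subset inj_onD[OF f] by blast
  show ?thesis
  proof
    show "finite (f ` V)" "finite J"
      using finite_points finite_classes bij_betw_finite[OF e] by auto
    show "card (f ` V) = 3 * card J"
      using card_points card_image[OF f] bij_betw_same_card[OF e] by simp
    show "T \<subseteq> f ` V" if "k \<in> J" "T \<in> (`) f ` P (e k)" for k T
      using that triple_subset[OF eI] by auto
    show "card T = 3" if "k \<in> J" "T \<in> (`) f ` P (e k)" for k T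
      using that card_triple[OF eI] triple_subset[OF eI]
      by (auto simp: card_image inj_on_subset[OF f])
    show "\<Union>((`) f ` P (e k)) = f ` V" if "k \<in> J" for k
      using class_covers[OF eI[OF that]] by auto
    show "f ` s (e k) \<in> (`) f ` P (e k)" if "k \<in> J" for k
      using transversal_in_class[OF eI[OF that]] by simp
    show "T = T'" if k: "k \<in> J" and T: "T \<in> (`) f ` P (e k)" "T' \<in> (`) f ` P (e k)"
      and meet: "T \<inter> T' \<noteq> {}" for k T T'
    proof -
      obtain A A' where A: "A \<in> P (e k)" "T = f ` A" and A': "A' \<in> P (e k)" "T' = f ` A'"
        using T by blast
      then have "A \<inter> A' \<noteq> {}"
        using meet A A' f_eq[OF _ _ A(1) A'(1) eI[OF k] eI[OF k]] by auto
      then show "T = T'"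
        using class_disjoint[OF eI[OF k] A(1) A'(1)] A A' by simp
    qed
    show "f ` s (e k) \<inter> f ` s (e k') = {}" if "k \<in> J" "k' \<in> J" "k \<noteq> k'" for k k'
    proof -
      have "s (e k) \<inter> s (e k') = {}"
        using that transversal_disjoint[OF eI eI] e_inj by blast
      moreover have "s (e k) \<subseteq> V" "s (e k') \<subseteq> V"
        using that triple_subset[OF eI] transversal_in_class[OF eI] by blast+
      ultimately show ?thesis
        using inj_on_image_Int[OF f] by (metis image_empty)
    qed
    show "k = k' \<and> T = T'"
      if k: "k \<in> J" "k' \<in> J" and T: "T \<in> (`) f ` P (e k)" "T' \<in> (`) f ` P (e k')"
        and xy: "x \<noteq> y" "{x, y} \<subseteq> T" "{x, y} \<subseteq> T'" for k k' T T' x y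
    proof -
      obtain A A' where A: "A \<in> P (e k)" "T = f ` A" and A': "A' \<in> P (e k')" "T' = f ` A'"
        using T by blast
      obtain a b where ab: "a \<in> A" "b \<in> A" "x = f a" "y = f b"
        using xy(2) A(2) by auto
      have "{a, b} \<subseteq> A'"
        using xy(3) A'(2) ab f_eq[OF _ _ A(1) A'(1) eI[OF k(1)] eI[OF k(2)]] by auto
      then have "e k = e k' \<and> A = A'"
        using pair_unique[OF eI[OF k(1)] eI[OF k(2)] A(1) A'(1), of a b] ab xy(1) by blast
      then show "k = k' \<and> T = T'"
        using e_inj k A A' by simp
    qed
  qed
qed

definition has_resolvable_packing :: "nat \<Rightarrow> bool" where
  "has_resolvable_packing m \<longleftrightarrow> (\<exists>(V::nat set) P s. resolvable_packing V {..<m} P s)"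

lemma has_resolvable_packingI:
  assumes "resolvable_packing (V :: 'p::countable set) I P s"
  shows "has_resolvable_packing (card I)"
proof -
  interpret resolvable_packing V I P s by fact
  obtain e where "bij_betw e {..<card I} I"
    using finite_classes ex_bij_betw_nat_finite lessThan_atLeast0 by metis
  then show ?thesis
    unfolding has_resolvable_packing_def
    using resolvable_packing_transfer[OF assms inj_on_subset[OF inj_to_nat subset_UNIV]] by blast
qed

locale packing_extension = resolvable_packing V "{..<m}" P s
  for V :: "nat set" and m :: nat and P s +
  fixes r N :: nat and Bo :: "nat set set"
  assumes r_le_m: "r \<le> m"
    and points_below: "V \<subseteq> {..<N}"
    and Bo_packing: "is_packing r 4 {0..<r} Bo"
begin

definition new_points :: "nat set" where
  "new_points = {N..<N + r}"

definition extended_triples :: "nat set set" where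
  "extended_triples = (\<lambda>(k, T). insert (N + k) T) ` (SIGMA k:{..<r}. P k)"

definition shifted_blocks :: "nat set set" where
  "shifted_blocks = (`) ((+) N) ` Bo"

definition blocks :: "nat set set" where
  "blocks = extended_triples \<union> shifted_blocks"

lemma class_index: "k < r \<Longrightarrow> k \<in> {..<m}"
  using r_le_m by simp

lemma extended_triplesE:
  assumes "b \<in> extended_triples"
  obtains k T where "k < r" "T \<in> P k" "b = insert (N + k) T"
  using assms unfolding extended_triples_def by blast

lemma new_points_disjoint: "V \<inter> new_points = {}"
  using points_below unfolding new_points_def by auto

lemma extended_triple_parts:
  assumes "k < r" "T \<in> P k"
  shows "insert (N + k) T \<inter> new_points = {N + k}" and "insert (N + k) T \<inter> V = T"
  using assms triple_subset[OF class_index] new_points_disjoint unfolding new_points_def by auto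

lemma shifted_blocks_packing: "is_packing r 4 new_points shifted_blocks"
  using is_packing_image[OF Bo_packing, of "(+) N"]
  unfolding new_points_def shifted_blocks_def by (simp add: add.commute)

lemma shifted_block_subset: "b \<in> shifted_blocks \<Longrightarrow> b \<subseteq> new_points"
  using shifted_blocks_packing unfolding is_packing_def by blast

lemma block_meets_new_points:
  assumes "b \<in> blocks"
  shows "b \<inter> new_points \<noteq> {}"
proof (cases "b \<in> extended_triples")
  case True
  then show ?thesis
    by (elim extended_triplesE) (simp add: extended_triple_parts)
next
  case False
  then have "b \<in> shifted_blocks"
    using assms unfolding blocks_def by blast
  moreover have "b \<noteq> {}" if "b \<in> shifted_blocks"
    using that shifted_blocks_packing unfolding is_packing_def by fastforce
  ultimately show ?thesis
    using shifted_block_subset by blast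
qed

lemma extended_triple_pair_unique:
  assumes b: "b \<in> extended_triples" and b': "b' \<in> extended_triples"
    and xy: "x \<noteq> y" "{x, y} \<subseteq> b" "{x, y} \<subseteq> b'"
  shows "b = b'"
proof -
  obtain k T where k: "k < r" "T \<in> P k" "b = insert (N + k) T"
    using b by (rule extended_triplesE)
  obtain k' T' where k': "k' < r" "T' \<in> P k'" "b' = insert (N + k') T'"
    using b' by (rule extended_triplesE)
  show ?thesis
  proof (cases "{x, y} \<subseteq> V")
    case True
    then have "{x, y} \<subseteq> b \<inter> V" "{x, y} \<subseteq> b' \<inter> V"
      using xy by simp_all
    then have "{x, y} \<subseteq> T" "{x, y} \<subseteq> T'"
      using extended_triple_parts(2) k k' by simp_all
    then show ?thesis
      using pair_unique[OF class_index class_index k(2) k'(2) xy(1)] k k' by simp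
  next
    case False
    then obtain z where z: "z \<in> {x, y}" "z \<notin> V"
      by blast
    moreover have "T \<subseteq> V" "T' \<subseteq> V"
      using triple_subset[OF class_index] k k' by simp_all
    ultimately have "z = N + k" "z = N + k'"
      using xy k(3) k'(3) by auto
    then have kk: "k = k'"
      by simp
    obtain w where w: "w \<in> {x, y}" "w \<noteq> z"
      using xy(1) z(1) by blast
    then have "w \<in> T \<inter> T'"
      using xy k k' \<open>z = N + k\<close> \<open>z = N + k'\<close> by auto
    then have "T = T'"
      using class_disjoint[OF class_index[OF k(1)] k(2)] k'(2) kk by blast
    then show ?thesis
      using k k' kk by simp
  qed
qed

lemma extended_shifted_no_common_pair:
  assumes "b \<in> extended_triples" "b' \<in> shifted_blocks" "{x, y} \<subseteq> b" "{x, y} \<subseteq> b'"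
  shows "x = y"
proof -
  obtain k T where "k < r" "T \<in> P k" "b = insert (N + k) T"
    using assms(1) by (rule extended_triplesE)
  then have "b \<inter> new_points = {N + k}"
    by (simp add: extended_triple_parts)
  moreover have "{x, y} \<subseteq> b \<inter> new_points"
    using assms(3,4) shifted_block_subset[OF assms(2)] by auto
  ultimately show ?thesis
    by simp
qed

lemma blocks_pair_unique:
  assumes b: "b \<in> blocks" "b' \<in> blocks" and xy: "x \<noteq> y" "{x, y} \<subseteq> b" "{x, y} \<subseteq> b'"
  shows "b = b'"
proof -
  have "b \<in> extended_triples \<longleftrightarrow> b' \<in> extended_triples"
    using b xy extended_shifted_no_common_pair[of b b' x y] extended_shifted_no_common_pair[of b' b x y]
    unfolding blocks_def by blast
  then consider "b \<in> extended_triples" "b' \<in> extended_triples" | "b \<in> shifted_blocks" "b' \<in> shifted_blocks"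
    using b unfolding blocks_def by blast
  then show ?thesis
  proof cases
    case 1
    then show ?thesis
      using extended_triple_pair_unique xy by blast
  next
    case 2
    then show ?thesis
      using is_packing_pair_unique[OF shifted_blocks_packing] xy by blast
  qed
qed

lemma extension_is_packing: "is_packing (3 * m + r) 4 (V \<union> new_points) blocks"
proof (rule is_packingI)
  show "finite (V \<union> new_points)"
    using finite_points unfolding new_points_def by simp
  show "card (V \<union> new_points) = 3 * m + r"
    using finite_points card_points new_points_disjoint
    by (simp add: card_Un_disjoint new_points_def)
  show "b \<subseteq> V \<union> new_points" if "b \<in> blocks" for b
    using that triple_subset[OF class_index] shifted_block_subset
    unfolding blocks_def new_points_def by (auto elim!: extended_triplesE)
  show "card b = 4" if "b \<in> blocks" for b
  proof (cases "b \<in> extended_triples")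
    case True
    then show ?thesis
    proof (rule extended_triplesE)
      fix k T assume k: "k < r" "T \<in> P k" "b = insert (N + k) T"
      have "N + k \<notin> T"
        using k triple_subset[OF class_index] points_below by force
      moreover have "card T = 3" "finite T"
        using card_triple[OF class_index[OF k(1)] k(2)] card.infinite by fastforce+
      ultimately show "card b = 4"
        using k(3) by simp
    qed
  next
    case False
    then show ?thesis
      using that shifted_blocks_packing unfolding blocks_def is_packing_def by blast
  qed
qed (fact blocks_pair_unique)

lemma card_extended_triples: "card extended_triples = r * m"
proof -
  have "inj_on (\<lambda>(k, T). insert (N + k) T) (SIGMA k:{..<r}. P k)"
  proof (rule inj_onI, clarify)
    fix k T k' T'
    assume k: "k < r" "T \<in> P k" and k': "k' < r" "T' \<in> P k'"
      and eq: "insert (N + k) T = insert (N + k') T'"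
    have "{N + k} = {N + k'}"
      using extended_triple_parts(1)[OF k] extended_triple_parts(1)[OF k'] eq by simp
    moreover have "T = T'"
      using extended_triple_parts(2)[OF k] extended_triple_parts(2)[OF k'] eq by simp
    ultimately show "k = k' \<and> T = T'"
      by simp
  qed
  then have "card extended_triples = card (SIGMA k:{..<r}. P k)"
    unfolding extended_triples_def by (rule card_image)
  also have "\<dots> = (\<Sum>k<r. card (P k))"
    using finite_class[OF class_index] by (simp add: card_SigmaI)
  also have "\<dots> = r * m"
    using card_class[OF class_index] by simp
  finally show ?thesis .
qed

lemma card_shifted_blocks: "card shifted_blocks = card Bo"
  unfolding shifted_blocks_def by (rule card_image) (simp add: inj_on_def inj_image_eq_iff)

lemma extended_shifted_disjoint: "extended_triples \<inter> shifted_blocks = {}"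
proof -
  have "b \<inter> V \<noteq> {}" if "b \<in> extended_triples" for b
    using that
  proof (rule extended_triplesE)
    fix k T assume k: "k < r" "T \<in> P k" "b = insert (N + k) T"
    then have "T \<noteq> {}"
      using card_triple[OF class_index] by fastforce
    then show "b \<inter> V \<noteq> {}"
      using extended_triple_parts(2)[OF k(1,2)] k(3) by simp
  qed
  then show ?thesis
    using shifted_block_subset new_points_disjoint by blast
qed

lemma card_blocks: "card blocks = r * m + card Bo"
proof -
  have "finite extended_triples"
    using finite_class[OF class_index] unfolding extended_triples_def by (intro finite_imageI finite_SigmaI) auto
  moreover have "finite shifted_blocks"
    by (rule is_packing_finite_blocks[OF shifted_blocks_packing])
  ultimately show ?thesis
    using extended_shifted_disjoint card_extended_triples card_shifted_blocks
    unfolding blocks_def by (simp add: card_Un_disjoint)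
qed

lemma transversal_extension_PPC:
  defines "Q \<equiv> (\<lambda>k. insert (N + k) (s k)) ` {..<r}"
  shows "is_PPC blocks Q" and "card Q = r"
proof -
  have s: "s k \<in> P k" if "k < r" for k
    using transversal_in_class[OF class_index[OF that]] .
  have disjoint: "insert (N + k) (s k) \<inter> insert (N + k') (s k') = {}"
    if k: "k < r" "k' < r" "k \<noteq> k'" for k k'
  proof -
    have "s k \<inter> s k' = {}"
      using transversal_disjoint[OF class_index[OF k(1)] class_index[OF k(2)] k(3)] .
    moreover have "s k \<subseteq> V" "s k' \<subseteq> V"
      using triple_subset[OF class_index] s k by simp_all
    ultimately show ?thesis
      using k(3) points_below by auto
  qed
  have "insert (N + k) (s k) \<in> extended_triples" if "k < r" for k
    unfolding extended_triples_def using s[OF that] that by (intro image_eqI[of _ _ "(k, s k)"]) auto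
  then show "is_PPC blocks Q"
    unfolding is_PPC_def Q_def blocks_def using disjoint by auto
  have "inj_on (\<lambda>k. insert (N + k) (s k)) {..<r}"
    using disjoint by (intro inj_onI) (metis Int_absorb insert_not_empty lessThan_iff)
  then show "card Q = r"
    unfolding Q_def by (simp add: card_image)
qed

lemma extension_largest_PPC: "largest_PPC_size blocks r"
proof -
  have "largest_PPC_size blocks (card new_points)"
    using transversal_extension_PPC block_meets_new_points
    by (intro largest_PPC_sizeI) (auto simp: new_points_def)
  then show ?thesis
    by (simp add: new_points_def)
qed

end

lemma packing_with_largest_PPC:
  assumes "has_resolvable_packing m" and "r \<le> m"
  shows "\<exists>(X::nat set) B. is_packing (3 * m + r) 4 X B \<and> finite B \<and>
           card B = r * m + D r 4 \<and> largest_PPC_size B r"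
proof -
  obtain V :: "nat set" and P s where rp: "resolvable_packing V {..<m} P s"
    using assms(1) unfolding has_resolvable_packing_def by blast
  obtain N where "V \<subseteq> {..<N}"
    using finite_nat_bounded[OF resolvable_packing.finite_points[OF rp]] by blast
  moreover obtain Bo where Bo: "is_packing r 4 {0..<r} Bo" "card Bo = D r 4"
    using D_attained by blast
  ultimately interpret packing_extension V m P s r N Bo
    using rp assms(2) by (simp add: packing_extension_def packing_extension_axioms_def)
  show ?thesis
    using extension_is_packing card_blocks extension_largest_PPC Bo(2)
      is_packing_finite_blocks[OF extension_is_packing] by metis
qed

lemma (in comm_group) translates_inv_eq:
  assumes "a \<in> carrier G" "b \<in> carrier G" "c \<in> carrier G" "d \<in> carrier G"
    and "j \<in> carrier G" "j' \<in> carrier G"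
    and "a \<otimes> j = c \<otimes> j'" "b \<otimes> j = d \<otimes> j'"
  shows "b \<otimes> inv a = d \<otimes> inv c"
proof -
  have "b \<otimes> inv a = (b \<otimes> j) \<otimes> inv (a \<otimes> j)"
    using assms(1,2,5) by (simp add: inv_mult m_ac)
  also have "\<dots> = (d \<otimes> j') \<otimes> inv (c \<otimes> j')"
    using assms(7,8) by simp
  also have "\<dots> = d \<otimes> inv c"
    using assms(3,4,6) by (simp add: inv_mult m_ac)
  finally show ?thesis .
qed

definition triple_point :: "'p::linorder set \<Rightarrow> nat \<Rightarrow> 'p" where
  "triple_point T q = sorted_list_of_set T ! q"

lemma triple_point_bij:
  assumes "card T = 3"
  shows "bij_betw (triple_point T) {..<3} T"
proof -
  have "finite T"
    using assms card.infinite by fastforce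
  then have "distinct (sorted_list_of_set T)" "set (sorted_list_of_set T) = T"
    "length (sorted_list_of_set T) = 3"
    using assms by simp_all
  then show ?thesis
    unfolding triple_point_def lessThan_def
    by (metis bij_betw_nth lessThan_def)
qed

locale difference_matrix = comm_group G for G (structure) +
  fixes row :: "nat \<Rightarrow> 'a \<Rightarrow> 'a"
  assumes finite_carrier: "finite (carrier G)"
    and row_closed: "q < 3 \<Longrightarrow> x \<in> carrier G \<Longrightarrow> row q x \<in> carrier G"
    and row_inj: "q < 3 \<Longrightarrow> inj_on (row q) (carrier G)"
    and row_one: "q < 3 \<Longrightarrow> row q \<one> = \<one>"
    and row_diff_inj: "q < 3 \<Longrightarrow> q' < 3 \<Longrightarrow> q \<noteq> q' \<Longrightarrow>
      inj_on (\<lambda>x. row q x \<otimes> inv (row q' x)) (carrier G)"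
begin

lemma row_surj:
  assumes "q < 3" "y \<in> carrier G"
  obtains x where "x \<in> carrier G" "row q x = y"
proof -
  have "row q ` carrier G \<subseteq> carrier G"
    using row_closed[OF assms(1)] by blast
  then have "row q ` carrier G = carrier G"
    by (rule endo_inj_surj[OF finite_carrier _ row_inj[OF assms(1)]])
  then show ?thesis
    using assms(2) that by (metis imageE)
qed

lemma row_eq_iff: "q < 3 \<Longrightarrow> x \<in> carrier G \<Longrightarrow> y \<in> carrier G \<Longrightarrow> row q x = row q y \<longleftrightarrow> x = y"
  by (meson row_inj inj_onD)

lemma row_translate_eq:
  assumes "q < 3" "x \<in> carrier G" "x' \<in> carrier G" "j \<in> carrier G"
  shows "row q x \<otimes> j = row q x' \<otimes> j \<longleftrightarrow> x = x'"
  using assms row_closed by (simp add: row_eq_iff)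

lemma two_rows_determine_column:
  assumes q: "q < 3" "q' < 3" "q \<noteq> q'"
    and G: "x \<in> carrier G" "x' \<in> carrier G" "j \<in> carrier G" "j' \<in> carrier G"
    and eq: "row q x \<otimes> j = row q x' \<otimes> j'" "row q' x \<otimes> j = row q' x' \<otimes> j'"
  shows "x = x' \<and> j = j'"
proof -
  have "row q' x \<otimes> inv (row q x) = row q' x' \<otimes> inv (row q x')"
    using translates_inv_eq[OF _ _ _ _ G(3,4) eq] q G row_closed by blast
  then have "x = x'"
    using inj_onD[OF row_diff_inj[OF q(2,1) q(3)[symmetric]]] G(1,2) by blast
  then show ?thesis
    using eq(1) q(1) G row_closed by simp
qed

definition lift_triple :: "'p::linorder set \<Rightarrow> 'a \<Rightarrow> 'a \<Rightarrow> ('p \<times> 'a) set" where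
  "lift_triple T x j = (\<lambda>q. (triple_point T q, row q x \<otimes> j)) ` {..<3}"

definition lift_class :: "('i \<Rightarrow> 'p::linorder set set) \<Rightarrow> 'i \<times> 'a \<Rightarrow> ('p \<times> 'a) set set" where
  "lift_class P = (\<lambda>(i, j). {lift_triple T x j | T x. T \<in> P i \<and> x \<in> carrier G})"

lemma mem_lift_triple:
  "(p, v) \<in> lift_triple T x j \<longleftrightarrow> (\<exists>q<3. p = triple_point T q \<and> v = row q x \<otimes> j)"
  unfolding lift_triple_def by auto

lemma lift_triple_one:
  assumes "card T = 3" "j \<in> carrier G"
  shows "lift_triple T \<one> j = T \<times> {j}"
proof -
  have "lift_triple T \<one> j = (\<lambda>p. (p, j)) ` (triple_point T ` {..<3})"
    unfolding lift_triple_def using assms(2) by (auto simp: row_one)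
  then show ?thesis
    using bij_betw_imp_surj_on[OF triple_point_bij[OF assms(1)]] by auto
qed

lemma lift_resolvable_packing:
  assumes "resolvable_packing V I P s"
  shows "resolvable_packing (V \<times> carrier G) (I \<times> carrier G) (lift_class P) (\<lambda>(i, j). s i \<times> {j})"
proof -
  interpret resolvable_packing V I P s by fact
  have tp: "bij_betw (triple_point T) {..<3} T" if "i \<in> I" "T \<in> P i" for i T
    using triple_point_bij[OF card_triple[OF that]] .
  have tp_in: "triple_point T q \<in> T" if "i \<in> I" "T \<in> P i" "q < 3" for i T q
    using bij_betwE[OF tp[OF that(1,2)]] that(3) by simp
  have tp_eq: "triple_point T q = triple_point T q' \<longleftrightarrow> q = q'"
    if "i \<in> I" "T \<in> P i" "q < 3" "q' < 3" for i T q q'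
    using bij_betw_imp_inj_on[OF tp[OF that(1,2)]] that(3,4) by (auto dest: inj_onD)
  have lift_classE: "\<And>thesis. B \<in> lift_class P (i, j) \<Longrightarrow>
      (\<And>T x. T \<in> P i \<Longrightarrow> x \<in> carrier G \<Longrightarrow> B = lift_triple T x j \<Longrightarrow> thesis) \<Longrightarrow> thesis" for B i j
    unfolding lift_class_def by auto
  have lift_subset: "B \<subseteq> V \<times> carrier G"
    if ij: "i \<in> I" "j \<in> carrier G" and B: "B \<in> lift_class P (i, j)" for B i j
  proof -
    obtain T x where T: "T \<in> P i" "x \<in> carrier G" "B = lift_triple T x j"
      using B by (auto elim: lift_classE)
    show ?thesis
      using T tp_in[OF ij(1) T(1)] triple_subset[OF ij(1) T(1)] row_closed ij(2)
      unfolding lift_triple_def by auto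
  qed
  show ?thesis
  proof
    show "finite (V \<times> carrier G)" "finite (I \<times> carrier G)"
      using finite_points finite_classes finite_carrier by simp_all
    show "card (V \<times> carrier G) = 3 * card (I \<times> carrier G)"
      using card_points by (simp add: card_cartesian_product)
  next
    fix ij B assume ij: "ij \<in> I \<times> carrier G" and B: "B \<in> lift_class P ij"
    obtain i j where ij': "ij = (i, j)" "i \<in> I" "j \<in> carrier G"
      using ij by blast
    show "B \<subseteq> V \<times> carrier G"
      using lift_subset ij' B by blast
    obtain T x where T: "T \<in> P i" "x \<in> carrier G" "B = lift_triple T x j"
      using B ij'(1) by (auto elim: lift_classE)
    have "inj_on (\<lambda>q. (triple_point T q, row q x \<otimes> j)) {..<3}"
      using tp_eq[OF ij'(2) T(1)] by (auto intro: inj_onI)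
    then show "card B = 3"
      unfolding T(3) lift_triple_def by (simp add: card_image)
  next
    fix ij B B' assume ij: "ij \<in> I \<times> carrier G" and B: "B \<in> lift_class P ij" "B' \<in> lift_class P ij"
      and meet: "B \<inter> B' \<noteq> {}"
    obtain i j where ij': "ij = (i, j)" "i \<in> I" "j \<in> carrier G"
      using ij by blast
    obtain T x where T: "T \<in> P i" "x \<in> carrier G" "B = lift_triple T x j"
      using B(1) ij'(1) by (auto elim: lift_classE)
    obtain T' x' where T': "T' \<in> P i" "x' \<in> carrier G" "B' = lift_triple T' x' j"
      using B(2) ij'(1) by (auto elim: lift_classE)
    obtain p v where "(p, v) \<in> B" "(p, v) \<in> B'"
      using meet by auto
    then obtain q q' where q: "q < 3" "p = triple_point T q" "v = row q x \<otimes> j"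
      and q': "q' < 3" "p = triple_point T' q'" "v = row q' x' \<otimes> j"
      using T(3) T'(3) mem_lift_triple by metis
    have "p \<in> T \<inter> T'"
      using tp_in[OF ij'(2) T(1) q(1)] tp_in[OF ij'(2) T'(1) q'(1)] q(2) q'(2) by simp
    then have "T = T'"
      using class_disjoint[OF ij'(2) T(1) T'(1)] by blast
    moreover have "q = q'"
      using tp_eq[OF ij'(2) T(1) q(1) q'(1)] trans[OF q(2)[symmetric] q'(2)] \<open>T = T'\<close> by blast
    ultimately have "x = x'"
      using q(3) q'(3) row_translate_eq[OF q(1) T(2) T'(2) ij'(3)] by simp
    then show "B = B'"
      using T T' \<open>T = T'\<close> by simp
  next
    fix ij assume ij: "ij \<in> I \<times> carrier G"
    obtain i j where ij': "ij = (i, j)" "i \<in> I" "j \<in> carrier G"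
      using ij by blast
    show "\<Union>(lift_class P ij) = V \<times> carrier G"
    proof (intro equalityI subsetI)
      fix a assume "a \<in> \<Union>(lift_class P ij)"
      then show "a \<in> V \<times> carrier G"
        using lift_subset ij' by blast
    next
      fix a assume "a \<in> V \<times> carrier G"
      then obtain p v where a: "a = (p, v)" "p \<in> V" "v \<in> carrier G"
        by blast
      obtain T where T: "T \<in> P i" "p \<in> T"
        using class_covers[OF ij'(2)] a(2) by blast
      obtain q where q: "q < 3" "triple_point T q = p"
        using bij_betw_imp_surj_on[OF tp[OF ij'(2) T(1)]] T(2) by (metis imageE lessThan_iff)
      obtain x where x: "x \<in> carrier G" "row q x = v \<otimes> inv j"
        using row_surj[OF q(1)] a(3) ij'(3) by (metis inv_closed m_closed)
      have "v = row q x \<otimes> j"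
        using x a(3) ij'(3) by (simp add: m_assoc)
      then have "a \<in> lift_triple T x j"
        using a(1) q mem_lift_triple by metis
      moreover have "lift_triple T x j \<in> lift_class P ij"
        using ij'(1) T(1) x(1) unfolding lift_class_def by auto
      ultimately show "a \<in> \<Union>(lift_class P ij)"
        by blast
    qed
  next
    fix ij assume ij: "ij \<in> I \<times> carrier G"
    obtain i j where ij': "ij = (i, j)" "i \<in> I" "j \<in> carrier G"
      using ij by blast
    have "s i \<times> {j} = lift_triple (s i) \<one> j"
      using lift_triple_one[OF card_triple[OF ij'(2) transversal_in_class[OF ij'(2)]] ij'(3)] by simp
    then show "(case ij of (i, j) \<Rightarrow> s i \<times> {j}) \<in> lift_class P ij"
      using ij' transversal_in_class unfolding lift_class_def by auto
  next
    fix ij ij' assume "ij \<in> I \<times> carrier G" "ij' \<in> I \<times> carrier G" "ij \<noteq> ij'"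
    then show "(case ij of (i, j) \<Rightarrow> s i \<times> {j}) \<inter> (case ij' of (i, j) \<Rightarrow> s i \<times> {j}) = {}"
      using transversal_disjoint by auto
  next
    fix ij ij' B B' a b
    assume ij: "ij \<in> I \<times> carrier G" "ij' \<in> I \<times> carrier G"
      and B: "B \<in> lift_class P ij" "B' \<in> lift_class P ij'"
      and ab: "a \<noteq> b" "{a, b} \<subseteq> B" "{a, b} \<subseteq> B'"
    obtain i j i' j' where ij': "ij = (i, j)" "ij' = (i', j')" "i \<in> I" "j \<in> carrier G"
      "i' \<in> I" "j' \<in> carrier G"
      using ij by blast
    obtain T x where T: "T \<in> P i" "x \<in> carrier G" "B = lift_triple T x j"
      using B(1) ij'(1) by (auto elim: lift_classE)
    obtain T' x' where T': "T' \<in> P i'" "x' \<in> carrier G" "B' = lift_triple T' x' j'"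
      using B(2) ij'(2) by (auto elim: lift_classE)
    obtain p1 v1 p2 v2 where a: "a = (p1, v1)" and b: "b = (p2, v2)"
      by fastforce
    obtain q1 q2 where q: "q1 < 3" "p1 = triple_point T q1" "v1 = row q1 x \<otimes> j"
      "q2 < 3" "p2 = triple_point T q2" "v2 = row q2 x \<otimes> j"
      using ab(2) T(3) a b mem_lift_triple by (metis insert_subset)
    obtain r1 r2 where r: "r1 < 3" "p1 = triple_point T' r1" "v1 = row r1 x' \<otimes> j'"
      "r2 < 3" "p2 = triple_point T' r2" "v2 = row r2 x' \<otimes> j'"
      using ab(3) T'(3) a b mem_lift_triple by (metis insert_subset)
    have "q1 \<noteq> q2"
      using ab(1) a b q by auto
    then have "p1 \<noteq> p2"
      using tp_eq[OF ij'(3) T(1) q(1) q(4)] q(2,5) by simp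
    moreover have "{p1, p2} \<subseteq> T"
      using tp_in[OF ij'(3) T(1) q(1)] tp_in[OF ij'(3) T(1) q(4)] q(2,5) by simp
    moreover have "{p1, p2} \<subseteq> T'"
      using tp_in[OF ij'(5) T'(1) r(1)] tp_in[OF ij'(5) T'(1) r(4)] r(2,5) by simp
    ultimately have ii: "i = i'" and TT: "T = T'"
      using pair_unique[OF ij'(3) ij'(5) T(1) T'(1)] by blast+
    have "r1 = q1" "r2 = q2"
      using tp_eq[OF ij'(3) T(1) r(1) q(1)] tp_eq[OF ij'(3) T(1) r(4) q(4)] q(2,5) r(2,5) TT
      by simp_all
    then have "x = x' \<and> j = j'"
      using two_rows_determine_column[OF q(1,4) \<open>q1 \<noteq> q2\<close> T(2) T'(2) ij'(4,6)] q(3,6) r(3,6)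
      by simp
    then show "ij = ij' \<and> B = B'"
      using ij'(1,2) ii TT T(3) T'(3) by simp
  qed
qed

end

definition plane3 :: "(nat \<times> nat) set" where
  "plane3 = {..<3} \<times> {..<3}"

definition line_index :: "nat \<Rightarrow> nat \<times> nat \<Rightarrow> nat" where
  "line_index c = (\<lambda>(u, w). if c = 0 then (w + 2 * u) mod 3 else if c = 1 then (w + u) mod 3 else u)"

definition line_pos :: "nat \<Rightarrow> nat \<times> nat \<Rightarrow> nat" where
  "line_pos c = (\<lambda>(u, w). if c = 2 then w else u)"

lemma less_3_cases: "(n::nat) < 3 \<longleftrightarrow> n = 0 \<or> n = 1 \<or> n = 2"
  by auto

lemma plane3_cases: "y \<in> plane3 \<longleftrightarrow> (\<exists>u w. y = (u, w) \<and> (u = 0 \<or> u = 1 \<or> u = 2) \<and> (w = 0 \<or> w = 1 \<or> w = 2))"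
  unfolding plane3_def by auto

lemma line_coords_less:
  "y \<in> plane3 \<Longrightarrow> c < 3 \<Longrightarrow> line_index c y < 3 \<and> line_pos c y < 3"
  unfolding plane3_def line_index_def line_pos_def by auto

lemma line_coords_inj:
  "y \<in> plane3 \<Longrightarrow> y' \<in> plane3 \<Longrightarrow> c < 3 \<Longrightarrow> line_index c y = line_index c y' \<Longrightarrow>
    line_pos c y = line_pos c y' \<Longrightarrow> y = y'"
  unfolding plane3_cases less_3_cases line_index_def line_pos_def by auto

lemma line_coords_surj:
  assumes "c < 3" "b < 3" "p < 3"
  obtains y where "y \<in> plane3" "line_index c y = b" "line_pos c y = p"
proof -
  define y where "y = (if c = 2 then (b, p) else (p, if c = 0 then (b + p) mod 3 else (b + 2 * p) mod 3))"
  have "y \<in> plane3 \<and> line_index c y = b \<and> line_pos c y = p"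
    using assms unfolding y_def less_3_cases plane3_def line_index_def line_pos_def by auto
  then show ?thesis
    using that by blast
qed

lemma lines_meet_once_ordered:
  assumes "y \<in> plane3" "y' \<in> plane3" "c < c'" "c' < 3"
    and "line_index c y = line_index c y'" "line_index c' y = line_index c' y'"
  shows "y = y'"
proof -
  have "c = 0 \<and> c' = 1 \<or> c = 0 \<and> c' = 2 \<or> c = 1 \<and> c' = 2"
    using assms(3,4) by auto
  then show ?thesis
    using assms(1,2,5,6) unfolding plane3_cases line_index_def by auto
qed

lemma lines_meet_once:
  assumes "y \<in> plane3" "y' \<in> plane3" "c < 3" "c' < 3" "c \<noteq> c'"
    and "line_index c y = line_index c y'" "line_index c' y = line_index c' y'"
  shows "y = y'"
  using assms lines_meet_once_ordered[of y y' c c'] lines_meet_once_ordered[of y y' c' c]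
  by (cases "c < c'") simp_all

lemma line_not_horizontal:
  "y \<in> plane3 \<Longrightarrow> y' \<in> plane3 \<Longrightarrow> y \<noteq> y' \<Longrightarrow> c < 3 \<Longrightarrow>
    line_index c y = line_index c y' \<Longrightarrow> snd y \<noteq> snd y'"
  unfolding plane3_cases less_3_cases line_index_def by auto

lemma card_line:
  assumes "c < 3" "b < 3"
  shows "card {y \<in> plane3. line_index c y = b} = 3"
proof -
  have "bij_betw (line_pos c) {y \<in> plane3. line_index c y = b} {..<3}"
  proof (rule bij_betw_imageI)
    show "inj_on (line_pos c) {y \<in> plane3. line_index c y = b}"
      using line_coords_inj assms(1) by (auto intro: inj_onI)
    show "line_pos c ` {y \<in> plane3. line_index c y = b} = {..<3}"
      using line_coords_less[OF _ assms(1)] line_coords_surj[OF assms]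
      by (auto simp: image_iff) (metis lessThan_iff)
  qed
  then show ?thesis
    by (simp add: bij_betw_same_card)
qed

locale plane_construction = difference_matrix +
  fixes e :: "nat \<Rightarrow> 'a"
  assumes e_closed: "c < 3 \<Longrightarrow> e c \<in> carrier G"
    and e_ne_one: "c < 2 \<Longrightarrow> e c \<noteq> \<one>"
    and e_distinct: "e 0 \<noteq> e 1"
begin

definition line_triple :: "nat \<Rightarrow> nat \<Rightarrow> 'a \<Rightarrow> 'a \<Rightarrow> ((nat \<times> nat) \<times> 'a) set" where
  "line_triple c b x j = (\<lambda>y. (y, row (line_pos c y) x \<otimes> j)) ` {y \<in> plane3. line_index c y = b}"

definition horizontal_triple :: "nat \<Rightarrow> nat \<Rightarrow> 'a \<Rightarrow> ((nat \<times> nat) \<times> 'a) set" where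
  "horizontal_triple c w j = (\<lambda>u. ((u, w), row (line_pos c (u, w)) (e c) \<otimes> j)) ` {..<3}"

definition plane_class :: "nat \<times> 'a \<Rightarrow> ((nat \<times> nat) \<times> 'a) set set" where
  "plane_class = (\<lambda>(c, j). {line_triple c b x j | b x. b < 3 \<and> x \<in> carrier G \<and> x \<noteq> e c}
     \<union> {horizontal_triple c w j | w. w < 3})"

lemma mem_line_triple:
  "(y, v) \<in> line_triple c b x j \<longleftrightarrow> y \<in> plane3 \<and> line_index c y = b \<and> v = row (line_pos c y) x \<otimes> j"
  unfolding line_triple_def by auto

lemma mem_horizontal_triple:
  "(y, v) \<in> horizontal_triple c w j \<longleftrightarrow> fst y < 3 \<and> snd y = w \<and> v = row (line_pos c y) (e c) \<otimes> j"
  unfolding horizontal_triple_def by (cases y) auto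

lemma plane_classE:
  assumes "B \<in> plane_class (c, j)"
  obtains (line) b x where "b < 3" "x \<in> carrier G" "x \<noteq> e c" "B = line_triple c b x j"
    | (horizontal) w where "w < 3" "B = horizontal_triple c w j"
  using assms unfolding plane_class_def by blast

lemma horizontal_in_plane3: "fst y < 3 \<Longrightarrow> snd y < 3 \<Longrightarrow> y \<in> plane3"
  unfolding plane3_def by (cases y) simp

lemma horizontal_quotients_distinct:
  assumes u: "u < 3" "u' < 3" "u \<noteq> u'" and "w < 3" and c: "c < 3" "c' < 3" "c \<noteq> c'"
  shows "row (line_pos c (u', w)) (e c) \<otimes> inv (row (line_pos c (u, w)) (e c)) \<noteq>
    row (line_pos c' (u', w)) (e c') \<otimes> inv (row (line_pos c' (u, w)) (e c'))"
proof -
  define f where "f x = row u' x \<otimes> inv (row u x)" for x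
  have quotient: "row (line_pos d (u', w)) (e d) \<otimes> inv (row (line_pos d (u, w)) (e d)) =
      (if d = 2 then \<one> else f (e d))" if "d < 3" for d
    using row_closed[OF \<open>w < 3\<close> e_closed[OF that]] unfolding f_def line_pos_def
    by (cases "d = 2") simp_all
  have f_inj: "f x = f x' \<longleftrightarrow> x = x'" if "x \<in> carrier G" "x' \<in> carrier G" for x x'
    using inj_onD[OF row_diff_inj[OF u(2,1) u(3)[symmetric]]] that unfolding f_def by blast
  have "f \<one> = \<one>"
    using u row_one unfolding f_def by simp
  then have "f (e 0) \<noteq> \<one>" "f (e 1) \<noteq> \<one>"
    using f_inj[OF e_closed one_closed] e_ne_one by simp_all
  moreover have "f (e 0) \<noteq> f (e 1)" "f (e 1) \<noteq> f (e 0)"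
    using f_inj[OF e_closed e_closed] e_distinct by auto
  ultimately show ?thesis
    using c(3) quotient[OF c(1)] quotient[OF c(2)] c(1,2) unfolding less_3_cases
    by (elim disjE) simp_all
qed

lemma line_triple_subset_card:
  assumes "c < 3" "b < 3" "x \<in> carrier G" "j \<in> carrier G"
  shows "line_triple c b x j \<subseteq> plane3 \<times> carrier G \<and> card (line_triple c b x j) = 3"
proof
  show "line_triple c b x j \<subseteq> plane3 \<times> carrier G"
    using assms line_coords_less row_closed unfolding line_triple_def by auto
  have "card (line_triple c b x j) = card {y \<in> plane3. line_index c y = b}"
    unfolding line_triple_def by (rule card_image) (simp add: inj_on_def)
  then show "card (line_triple c b x j) = 3"
    using card_line[OF assms(1,2)] by simp
qed

lemma horizontal_triple_subset_card:
  assumes "c < 3" "w < 3" "j \<in> carrier G"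
  shows "horizontal_triple c w j \<subseteq> plane3 \<times> carrier G \<and> card (horizontal_triple c w j) = 3"
proof
  show "horizontal_triple c w j \<subseteq> plane3 \<times> carrier G"
    using assms line_coords_less horizontal_in_plane3 row_closed e_closed
    unfolding horizontal_triple_def by auto
  have "card (horizontal_triple c w j) = card {..<3::nat}"
    unfolding horizontal_triple_def by (rule card_image) (simp add: inj_on_def)
  then show "card (horizontal_triple c w j) = 3"
    by simp
qed

lemma plane_class_triple:
  assumes "c < 3" "j \<in> carrier G" "B \<in> plane_class (c, j)"
  shows "B \<subseteq> plane3 \<times> carrier G \<and> card B = 3"
  using assms(3)
proof (cases rule: plane_classE)
  case (line b x)
  then show ?thesis
    using line_triple_subset_card assms(1,2) by simp
next
  case (horizontal w)
  then show ?thesis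
    using horizontal_triple_subset_card assms(1,2) by simp
qed

lemma plane_class_disjoint:
  assumes c: "c < 3" "j \<in> carrier G" and B: "B \<in> plane_class (c, j)" "B' \<in> plane_class (c, j)"
    and meet: "(y, v) \<in> B" "(y, v) \<in> B'"
  shows "B = B'"
proof -
  have pos: "line_pos c y < 3" if "y \<in> plane3"
    using line_coords_less[OF that c(1)] by simp
  have line_column: "x = x'"
    if "(y, v) \<in> line_triple c b x j" "(y, v) \<in> line_triple c b' x' j" "x \<in> carrier G" "x' \<in> carrier G"
    for b b' x x'
    using that row_translate_eq[OF pos _ _ c(2)] unfolding mem_line_triple by auto
  have exceptional_column: "x = e c"
    if "(y, v) \<in> line_triple c b x j" "(y, v) \<in> horizontal_triple c w j" "x \<in> carrier G" for b w x
    using that row_translate_eq[OF pos _ e_closed[OF c(1)] c(2)]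
    unfolding mem_line_triple mem_horizontal_triple by auto
  show ?thesis
    using B(1)
  proof (cases rule: plane_classE)
    case L: (line b x)
    show ?thesis
      using B(2)
    proof (cases rule: plane_classE)
      case (line b' x')
      then show ?thesis
        using L meet line_column[of b x b' x'] mem_line_triple by metis
    next
      case (horizontal w)
      then show ?thesis
        using L meet exceptional_column by blast
    qed
  next
    case H: (horizontal w)
    show ?thesis
      using B(2)
    proof (cases rule: plane_classE)
      case (line b x)
      then show ?thesis
        using H meet exceptional_column by blast
    next
      case (horizontal w')
      then show ?thesis
        using H meet mem_horizontal_triple by metis
    qed
  qed
qed

lemma plane_class_covers:
  assumes c: "c < 3" "j \<in> carrier G"
  shows "\<Union>(plane_class (c, j)) = plane3 \<times> carrier G"
proof (intro equalityI subsetI)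
  fix a assume "a \<in> \<Union>(plane_class (c, j))"
  then show "a \<in> plane3 \<times> carrier G"
    using plane_class_triple[OF c] by blast
next
  fix a assume "a \<in> plane3 \<times> carrier G"
  then obtain y v where a: "a = (y, v)" "y \<in> plane3" "v \<in> carrier G"
    by blast
  have pos: "line_pos c y < 3" "line_index c y < 3" "snd y < 3"
    using line_coords_less[OF a(2) c(1)] a(2) unfolding plane3_def by auto
  obtain x where x: "x \<in> carrier G" "row (line_pos c y) x = v \<otimes> inv j"
    using row_surj[OF pos(1)] a(3) c(2) by (metis inv_closed m_closed)
  have v: "v = row (line_pos c y) x \<otimes> j"
    using x a(3) c(2) by (simp add: m_assoc)
  show "a \<in> \<Union>(plane_class (c, j))"
  proof (cases "x = e c")
    case True
    then have "(y, v) \<in> horizontal_triple c (snd y) j"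
      unfolding mem_horizontal_triple using a(2) v unfolding plane3_def by auto
    moreover have "horizontal_triple c (snd y) j \<in> plane_class (c, j)"
      using pos(3) unfolding plane_class_def by auto
    ultimately show ?thesis
      using a(1) by blast
  next
    case False
    then have "(y, v) \<in> line_triple c (line_index c y) x j"
      unfolding mem_line_triple using a(2) v by simp
    moreover have "line_triple c (line_index c y) x j \<in> plane_class (c, j)"
      using pos(2) x(1) False unfolding plane_class_def by auto
    ultimately show ?thesis
      using a(1) by blast
  qed
qed

lemma plane_class_point_unique:
  assumes "B \<in> plane_class (c, j)" "(y, v) \<in> B" "(y, v') \<in> B"
  shows "v = v'"
  using assms(1)
proof (cases rule: plane_classE)
  case (line b x)
  then show ?thesis
    using assms(2,3) mem_line_triple by metis
next
  case (horizontal w)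
  then show ?thesis
    using assms(2,3) mem_horizontal_triple by metis
qed

lemma line_triples_common_pair:
  assumes c: "c < 3" "c' < 3" and G: "x \<in> carrier G" "x' \<in> carrier G" "j \<in> carrier G" "j' \<in> carrier G"
    and "y1 \<noteq> y2"
    and "(y1, v1) \<in> line_triple c b x j" "(y2, v2) \<in> line_triple c b x j"
    and "(y1, v1) \<in> line_triple c' b' x' j'" "(y2, v2) \<in> line_triple c' b' x' j'"
  shows "c = c' \<and> b = b' \<and> x = x' \<and> j = j'"
proof -
  have y: "y1 \<in> plane3" "y2 \<in> plane3" "line_index c y1 = b" "line_index c y2 = b"
    "line_index c' y1 = b'" "line_index c' y2 = b'"
    and v: "v1 = row (line_pos c y1) x \<otimes> j" "v2 = row (line_pos c y2) x \<otimes> j"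
    "v1 = row (line_pos c' y1) x' \<otimes> j'" "v2 = row (line_pos c' y2) x' \<otimes> j'"
    using assms(8-11) unfolding mem_line_triple by auto
  have "c = c'"
    using lines_meet_once[OF y(1,2) c] y(3-6) \<open>y1 \<noteq> y2\<close> by auto
  moreover have "line_pos c y1 \<noteq> line_pos c y2"
    using line_coords_inj[OF y(1,2) c(1)] y(3,4) \<open>y1 \<noteq> y2\<close> by auto
  moreover have "line_pos c y1 < 3" "line_pos c y2 < 3"
    using line_coords_less[OF _ c(1)] y(1,2) by auto
  ultimately show ?thesis
    using two_rows_determine_column[of "line_pos c y1" "line_pos c y2" x x' j j'] G v y(3-6)
    by auto
qed

lemma line_horizontal_no_common_pair:
  assumes "c < 3" "y1 \<noteq> y2"
    and "(y1, v1) \<in> line_triple c b x j" "(y2, v2) \<in> line_triple c b x j"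
    and "(y1, v1) \<in> horizontal_triple c' w j'" "(y2, v2) \<in> horizontal_triple c' w j'"
  shows False
  using assms line_not_horizontal[OF _ _ assms(2,1)] unfolding mem_line_triple mem_horizontal_triple
  by auto

lemma horizontal_triples_common_pair:
  assumes c: "c < 3" "c' < 3" and G: "j \<in> carrier G" "j' \<in> carrier G"
    and "w < 3" "y1 \<noteq> y2"
    and "(y1, v1) \<in> horizontal_triple c w j" "(y2, v2) \<in> horizontal_triple c w j"
    and "(y1, v1) \<in> horizontal_triple c' w' j'" "(y2, v2) \<in> horizontal_triple c' w' j'"
  shows "c = c' \<and> w = w' \<and> j = j'"
proof -
  obtain u1 u2 where y: "y1 = (u1, w)" "y2 = (u2, w)" "u1 < 3" "u2 < 3" "w = w'"
    using assms(7-10) unfolding mem_horizontal_triple by (metis prod.collapse)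
  have "u1 \<noteq> u2"
    using \<open>y1 \<noteq> y2\<close> y by auto
  have v: "v1 = row (line_pos c y1) (e c) \<otimes> j" "v2 = row (line_pos c y2) (e c) \<otimes> j"
    "v1 = row (line_pos c' y1) (e c') \<otimes> j'" "v2 = row (line_pos c' y2) (e c') \<otimes> j'"
    using assms(7-10) unfolding mem_horizontal_triple by auto
  have closed: "row (line_pos d (u, w)) (e d) \<in> carrier G" if "d < 3" "u < 3" for d u
    using row_closed[OF _ e_closed[OF that(1)]] line_coords_less[OF horizontal_in_plane3 that(1)]
      that(2) \<open>w < 3\<close> by simp
  have "row (line_pos c (u2, w)) (e c) \<otimes> inv (row (line_pos c (u1, w)) (e c)) =
      row (line_pos c' (u2, w)) (e c') \<otimes> inv (row (line_pos c' (u1, w)) (e c'))"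
    using translates_inv_eq[OF closed closed closed closed G] c y v by simp
  then have "c = c'"
    using horizontal_quotients_distinct[OF y(3,4) \<open>u1 \<noteq> u2\<close> \<open>w < 3\<close> c] by blast
  moreover have "j = j'"
    using v(1,3) closed[OF c(1) y(3)] G y(1) calculation by simp
  ultimately show ?thesis
    using y(5) by simp
qed

lemma plane_class_pair_unique:
  assumes c: "c < 3" "c' < 3" "j \<in> carrier G" "j' \<in> carrier G"
    and B: "B \<in> plane_class (c, j)" "B' \<in> plane_class (c', j')"
    and ab: "a \<noteq> a'" "{a, a'} \<subseteq> B" "{a, a'} \<subseteq> B'"
  shows "(c, j) = (c', j') \<and> B = B'"
proof -
  obtain y1 v1 y2 v2 where a: "a = (y1, v1)" "a' = (y2, v2)"
    by fastforce
  have mem: "(y1, v1) \<in> B" "(y2, v2) \<in> B" "(y1, v1) \<in> B'" "(y2, v2) \<in> B'"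
    using ab a by auto
  have "y1 \<noteq> y2"
    using ab(1) a plane_class_point_unique[OF B(1) mem(1)] mem(2) by blast
  show ?thesis
    using B(1)
  proof (cases rule: plane_classE)
    case L: (line b x)
    show ?thesis
      using B(2)
    proof (cases rule: plane_classE)
      case (line b' x')
      then show ?thesis
        using line_triples_common_pair[OF c(1,2) L(2) line(2) c(3,4) \<open>y1 \<noteq> y2\<close>] L mem by auto
    next
      case (horizontal w)
      then show ?thesis
        using line_horizontal_no_common_pair[OF c(1) \<open>y1 \<noteq> y2\<close>] L mem by blast
    qed
  next
    case H: (horizontal w)
    show ?thesis
      using B(2)
    proof (cases rule: plane_classE)
      case (line b x)
      then show ?thesis
        using line_horizontal_no_common_pair[OF c(2) \<open>y1 \<noteq> y2\<close>] H mem by blast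
    next
      case (horizontal w')
      then show ?thesis
        using horizontal_triples_common_pair[OF c H(1) \<open>y1 \<noteq> y2\<close>] H mem by auto
    qed
  qed
qed

lemma plane_resolvable_packing:
  "resolvable_packing (plane3 \<times> carrier G) ({..<3} \<times> carrier G) plane_class
     (\<lambda>(c, j). horizontal_triple c c j)"
proof
  show "finite (plane3 \<times> carrier G)" "finite ({..<3::nat} \<times> carrier G)"
    using finite_carrier unfolding plane3_def by simp_all
  show "card (plane3 \<times> carrier G) = 3 * card ({..<3::nat} \<times> carrier G)"
    unfolding plane3_def by (simp add: card_cartesian_product)
next
  fix cj B assume "cj \<in> {..<3} \<times> carrier G" "B \<in> plane_class cj"
  then show "B \<subseteq> plane3 \<times> carrier G" "card B = 3"
    using plane_class_triple by auto
next
  fix cj B B' assume cj: "cj \<in> {..<3} \<times> carrier G"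
    and B: "B \<in> plane_class cj" "B' \<in> plane_class cj" and "B \<inter> B' \<noteq> {}"
  then obtain y v where yv: "(y, v) \<in> B" "(y, v) \<in> B'"
    by auto
  obtain c j where c: "cj = (c, j)" "c < 3" "j \<in> carrier G"
    using cj by auto
  show "B = B'"
    using plane_class_disjoint[OF c(2,3) _ _ yv] B c(1) by simp
next
  fix cj :: "nat \<times> 'a" assume "cj \<in> {..<3} \<times> carrier G"
  then show "\<Union>(plane_class cj) = plane3 \<times> carrier G"
    using plane_class_covers by auto
next
  fix cj cj' B B' a a'
  assume "cj \<in> {..<3} \<times> carrier G" "cj' \<in> {..<3} \<times> carrier G" and B: "B \<in> plane_class cj"
    "B' \<in> plane_class cj'" and "a \<noteq> a'" "{a, a'} \<subseteq> B" "{a, a'} \<subseteq> B'"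
  moreover obtain c j c' j' where "cj = (c, j)" "cj' = (c', j')"
    by fastforce
  ultimately show "cj = cj' \<and> B = B'"
    using plane_class_pair_unique[of c c' j j' B B' a a'] by simp
next
  fix cj :: "nat \<times> 'a" assume "cj \<in> {..<3} \<times> carrier G"
  then show "(case cj of (c, j) \<Rightarrow> horizontal_triple c c j) \<in> plane_class cj"
    unfolding plane_class_def by auto
next
  fix cj cj' :: "nat \<times> 'a" assume cj: "cj \<in> {..<3} \<times> carrier G" "cj' \<in> {..<3} \<times> carrier G"
    and "cj \<noteq> cj'"
  obtain c j c' j' where c: "cj = (c, j)" "cj' = (c', j')" "c < 3" "j \<in> carrier G" "j' \<in> carrier G"
    using cj by fastforce
  have "horizontal_triple c c j \<inter> horizontal_triple c' c' j' = {}"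
  proof (rule ccontr)
    assume "horizontal_triple c c j \<inter> horizontal_triple c' c' j' \<noteq> {}"
    then obtain y v where "(y, v) \<in> horizontal_triple c c j" "(y, v) \<in> horizontal_triple c' c' j'"
      by auto
    then have y: "fst y < 3" "snd y = c" "c = c'" and
      "row (line_pos c y) (e c) \<otimes> j = row (line_pos c y) (e c) \<otimes> j'"
      unfolding mem_horizontal_triple by auto
    moreover have "row (line_pos c y) (e c) \<in> carrier G"
      using row_closed[OF _ e_closed[OF c(3)]] line_coords_less[OF horizontal_in_plane3 c(3)] y c(3)
      by simp
    ultimately have "j = j'"
      using c(4,5) by simp
    then show False
      using \<open>cj \<noteq> cj'\<close> c y by simp
  qed
  then show "(case cj of (c, j) \<Rightarrow> horizontal_triple c c j) \<inter>
      (case cj' of (c, j) \<Rightarrow> horizontal_triple c c j) = {}"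
    using c by simp
qed

end

lemma has_resolvable_packing_1: "has_resolvable_packing 1"
proof -
  have "resolvable_packing {0, 1, 2 :: nat} {0 :: nat} (\<lambda>_. {{0, 1, 2}}) (\<lambda>_. {0, 1, 2})"
    by unfold_locales auto
  then show ?thesis
    using has_resolvable_packingI by fastforce
qed

lemma has_resolvable_packing_mult:
  fixes G :: "('a::countable, 'b) monoid_scheme"
  assumes "has_resolvable_packing m" and "difference_matrix G row"
  shows "has_resolvable_packing (m * card (carrier G))"
proof -
  interpret difference_matrix G row by fact
  obtain V :: "nat set" and P s where "resolvable_packing V {..<m} P s"
    using assms(1) unfolding has_resolvable_packing_def by blast
  then have "resolvable_packing (V \<times> carrier G) ({..<m} \<times> carrier G) (lift_class P) (\<lambda>(i, j). s i \<times> {j})"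
    by (rule lift_resolvable_packing)
  then show ?thesis
    using has_resolvable_packingI by (fastforce simp: card_cartesian_product)
qed

lemma has_resolvable_packing_plane:
  fixes G :: "('a::countable, 'b) monoid_scheme"
  assumes "difference_matrix G row" and "3 \<le> card (carrier G)"
  shows "has_resolvable_packing (3 * card (carrier G))"
proof -
  interpret difference_matrix G row by fact
  have "Suc (Suc 0) \<le> card (carrier G - {\<one>\<^bsub>G\<^esub>})"
    using assms(2) finite_carrier by (simp add: card_Diff_singleton)
  then obtain e0 A where "carrier G - {\<one>\<^bsub>G\<^esub>} = insert e0 A" "e0 \<notin> A" "Suc 0 \<le> card A"
    unfolding card_le_Suc_iff by blast
  moreover from this(3) obtain e1 where "e1 \<in> A"
    by (metis Suc_le_eq card_gt_0_iff ex_in_conv)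
  ultimately have e: "e0 \<in> carrier G" "e1 \<in> carrier G" "e0 \<noteq> \<one>\<^bsub>G\<^esub>" "e1 \<noteq> \<one>\<^bsub>G\<^esub>" "e0 \<noteq> e1"
    by blast+
  define e where "e c = (if c = 0 then e0 else if c = 1 then e1 else \<one>\<^bsub>G\<^esub>)" for c :: nat
  interpret plane_construction G row e
    using e by unfold_locales (auto simp: e_def)
  show ?thesis
    using has_resolvable_packingI[OF plane_resolvable_packing] by (simp add: card_cartesian_product)
qed

lemma mod_mult_cancel_coprime:
  fixes k x y b :: int
  assumes "coprime k b" "x \<in> {0..<b}" "y \<in> {0..<b}" "k * x mod b = k * y mod b"
  shows "x = y"
proof -
  have "b dvd k * (x - y)"
    using assms(4) by (simp add: mod_eq_dvd_iff right_diff_distrib)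
  then have "b dvd x - y"
    using assms(1) by (simp add: coprime_commute coprime_dvd_mult_right_iff)
  then have "x mod b = y mod b"
    by (simp add: mod_eq_dvd_iff)
  then show ?thesis
    using assms(2,3) by simp
qed

definition cyclic_row :: "nat \<Rightarrow> nat \<Rightarrow> int \<Rightarrow> int" where
  "cyclic_row b q x = (int q + 1) * x mod int b"

lemma cyclic_difference_matrix:
  assumes "coprime b 6"
  shows "difference_matrix (integer_mod_group b) (cyclic_row b)"
proof -
  have "b \<noteq> 0"
    using assms by (rule_tac notI) simp
  then have carrier: "carrier (integer_mod_group b) = {0..<int b}"
    by (simp add: carrier_integer_mod_group)
  have "coprime 2 b" "coprime 3 b"
    using assms coprime_mult_right_iff[of b 2 3] by (simp_all add: coprime_commute)
  then have "coprime 2 (int b)" "coprime 3 (int b)"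
    by (metis coprime_int_iff of_nat_numeral)+
  then have unit: "coprime k (int b)" if "k \<in> {-2, -1, 1, 2, 3}" for k
    using that by auto
  have diff: "cyclic_row b q x \<otimes>\<^bsub>integer_mod_group b\<^esub> inv\<^bsub>integer_mod_group b\<^esub> cyclic_row b q' x =
      (int q - int q') * x mod int b" for q q' x
  proof -
    have "cyclic_row b q' x \<in> carrier (integer_mod_group b)"
      using carrier \<open>b \<noteq> 0\<close> by (simp add: cyclic_row_def)
    then have "cyclic_row b q x \<otimes>\<^bsub>integer_mod_group b\<^esub> inv\<^bsub>integer_mod_group b\<^esub> cyclic_row b q' x =
        ((int q + 1) * x - (int q' + 1) * x) mod int b"
      by (simp add: cyclic_row_def mod_add_right_eq mod_minus_eq mod_diff_left_eq)
    then show ?thesis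
      by (simp add: algebra_simps)
  qed
  show ?thesis
  proof (intro difference_matrix.intro difference_matrix_axioms.intro)
    show "comm_group (integer_mod_group b)"
      by simp
    show "finite (carrier (integer_mod_group b))"
      using carrier by simp
    show "cyclic_row b q x \<in> carrier (integer_mod_group b)" for q x
      using carrier \<open>b \<noteq> 0\<close> by (simp add: cyclic_row_def)
    show "cyclic_row b q \<one>\<^bsub>integer_mod_group b\<^esub> = \<one>\<^bsub>integer_mod_group b\<^esub>" for q
      by (simp add: cyclic_row_def)
    show "inj_on (cyclic_row b q) (carrier (integer_mod_group b))" if "q < 3" for q
    proof (rule inj_onI)
      fix x y assume "x \<in> carrier (integer_mod_group b)" "y \<in> carrier (integer_mod_group b)"
        "cyclic_row b q x = cyclic_row b q y"
      moreover have "int q + 1 \<in> {-2, -1, 1, 2, 3}"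
        using that by (auto simp: less_3_cases)
      ultimately show "x = y"
        using mod_mult_cancel_coprime[OF unit] unfolding carrier cyclic_row_def by blast
    qed
    show "inj_on (\<lambda>x. cyclic_row b q x \<otimes>\<^bsub>integer_mod_group b\<^esub> inv\<^bsub>integer_mod_group b\<^esub> cyclic_row b q' x)
        (carrier (integer_mod_group b))" if "q < 3" "q' < 3" "q \<noteq> q'" for q q'
    proof (rule inj_onI)
      fix x y assume "x \<in> carrier (integer_mod_group b)" "y \<in> carrier (integer_mod_group b)"
        "cyclic_row b q x \<otimes>\<^bsub>integer_mod_group b\<^esub> inv\<^bsub>integer_mod_group b\<^esub> cyclic_row b q' x =
         cyclic_row b q y \<otimes>\<^bsub>integer_mod_group b\<^esub> inv\<^bsub>integer_mod_group b\<^esub> cyclic_row b q' y"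
      moreover have "int q - int q' \<in> {-2, -1, 1, 2, 3}"
        using that by (auto simp: less_3_cases)
      ultimately show "x = y"
        using mod_mult_cancel_coprime[OF unit] diff unfolding carrier by metis
    qed
  qed
qed

lemma int_less_3_cases: "0 \<le> (a::int) \<and> a < 3 \<longleftrightarrow> a = 0 \<or> a = 1 \<or> a = 2"
  by auto

definition gf9_row :: "nat \<Rightarrow> int \<times> int \<Rightarrow> int \<times> int" where
  "gf9_row q = (\<lambda>(a, c). ((int q * a - c) mod 3, (a + int q * c) mod 3))"

lemma gf9_difference_matrix:
  "difference_matrix (integer_mod_group 3 \<times>\<times> integer_mod_group 3) gf9_row"
proof -
  let ?G = "integer_mod_group 3 \<times>\<times> integer_mod_group 3"
  have carrier: "carrier ?G = {0..<3} \<times> {0..<3}"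
    by (simp add: carrier_integer_mod_group)
  have group: "group ?G"
    by (simp add: DirProd_group)
  have diff: "gf9_row q x \<otimes>\<^bsub>?G\<^esub> inv\<^bsub>?G\<^esub> gf9_row q' x =
      ((int q - int q') * fst x mod 3, (int q - int q') * snd x mod 3)" for q q' x
  proof -
    obtain a c where x: "x = (a, c)"
      by fastforce
    have "gf9_row q x \<otimes>\<^bsub>?G\<^esub> inv\<^bsub>?G\<^esub> gf9_row q' x =
        (((int q * a - c) mod 3 - (int q' * a - c) mod 3) mod 3,
         ((a + int q * c) mod 3 - (a + int q' * c) mod 3) mod 3)"
      unfolding x gf9_row_def by (simp add: carrier_integer_mod_group mod_add_right_eq)
    then show ?thesis
      unfolding x by (simp add: mod_diff_eq algebra_simps)
  qed
  have unit: "coprime k 3" if "k \<in> {-2, -1, 1, 2 :: int}" for k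
    using that by auto
  show ?thesis
  proof (intro difference_matrix.intro difference_matrix_axioms.intro)
    show "comm_group ?G"
      using group by (rule group.group_comm_groupI) (simp add: mult_DirProd' add.commute)
    show "finite (carrier ?G)"
      unfolding carrier by simp
    show "gf9_row q x \<in> carrier ?G" for q x
      unfolding carrier gf9_row_def by (simp split: prod.split)
    show "gf9_row q \<one>\<^bsub>?G\<^esub> = \<one>\<^bsub>?G\<^esub>" for q
      by (simp add: gf9_row_def)
    show "inj_on (gf9_row q) (carrier ?G)" if "q < 3" for q
    proof (rule inj_onI)
      fix x y assume "x \<in> carrier ?G" "y \<in> carrier ?G" "gf9_row q x = gf9_row q y"
      moreover obtain a c a' c' where "x = (a, c)" "y = (a', c')"
        by fastforce
      ultimately have "a \<in> {0..<3}" "c \<in> {0..<3}" "a' \<in> {0..<3}" "c' \<in> {0..<3}"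
        "(int q * a - c) mod 3 = (int q * a' - c') mod 3" "(a + int q * c) mod 3 = (a' + int q * c') mod 3"
        "x = (a, c)" "y = (a', c')"
        unfolding carrier gf9_row_def by auto
      then show "x = y"
        using that unfolding less_3_cases atLeastLessThan_iff int_less_3_cases by (elim disjE) simp_all
    qed
    show "inj_on (\<lambda>x. gf9_row q x \<otimes>\<^bsub>?G\<^esub> inv\<^bsub>?G\<^esub> gf9_row q' x) (carrier ?G)"
      if "q < 3" "q' < 3" "q \<noteq> q'" for q q'
    proof (rule inj_onI)
      fix x y assume xy: "x \<in> carrier ?G" "y \<in> carrier ?G"
        and eq: "gf9_row q x \<otimes>\<^bsub>?G\<^esub> inv\<^bsub>?G\<^esub> gf9_row q' x = gf9_row q y \<otimes>\<^bsub>?G\<^esub> inv\<^bsub>?G\<^esub> gf9_row q' y"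
      have k: "coprime (int q - int q') 3"
        using that by (intro unit) (auto simp: less_3_cases)
      obtain a c a' c' where x: "x = (a, c)" "y = (a', c')"
        by fastforce
      have "(int q - int q') * a mod 3 = (int q - int q') * a' mod 3"
        "(int q - int q') * c mod 3 = (int q - int q') * c' mod 3"
        using eq unfolding diff x by simp_all
      moreover have "a \<in> {0..<3}" "a' \<in> {0..<3}" "c \<in> {0..<3}" "c' \<in> {0..<3}"
        using xy unfolding x carrier by auto
      ultimately show "x = y"
        using mod_mult_cancel_coprime[OF k] unfolding x by blast
    qed
  qed
qed

lemma coprime_6_iff: "coprime (t::nat) 6 \<longleftrightarrow> odd t \<and> \<not> 3 dvd t"
proof -
  have "coprime t 3 \<longleftrightarrow> coprime (t mod 3) 3"
    by simp
  moreover have "t mod 3 = 0 \<or> t mod 3 = 1 \<or> t mod 3 = 2"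
    by auto
  moreover have "coprime (1::nat) 3" "coprime (2::nat) 3" "\<not> coprime (0::nat) 3"
    by simp_all
  ultimately have "coprime t 3 \<longleftrightarrow> \<not> 3 dvd t"
    by (metis dvd_eq_mod_eq_0)
  then show ?thesis
    using coprime_mult_right_iff[of t 2 3] by simp
qed

lemma card_integer_mod_group: "0 < b \<Longrightarrow> card (carrier (integer_mod_group b)) = b"
  by (simp add: carrier_integer_mod_group)

lemma has_resolvable_packing_odd:
  assumes "odd m" and "m \<noteq> 3"
  shows "has_resolvable_packing m"
  using assms
proof (induction m rule: less_induct)
  case (less m)
  have gf9: "card (carrier (integer_mod_group 3 \<times>\<times> integer_mod_group 3)) = 9"
    by (simp add: carrier_integer_mod_group card_cartesian_product)
  consider (nine) k where "m = 9 * k" | (three) t where "m = 3 * t" "\<not> 3 dvd t"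
    | (coprime) "\<not> 3 dvd m"
  proof (cases "3 dvd m")
    case True
    then obtain t where t: "m = 3 * t"
      by blast
    show ?thesis
    proof (cases "3 dvd t")
      case True
      then show ?thesis
        using t that(1) by (auto elim!: dvdE)
    qed (use t that(2) in blast)
  qed (use that(3) in blast)
  then show ?case
  proof cases
    case nine
    show ?thesis
    proof (cases "k = 3")
      case True
      then show ?thesis
        using has_resolvable_packing_plane[OF gf9_difference_matrix] gf9 nine by simp
    next
      case False
      moreover have "odd k"
        using nine less.prems(1) by simp
      moreover from this have "k < m"
        using nine odd_pos by simp
      ultimately have "has_resolvable_packing k"
        using less.IH by blast
      then show ?thesis
        using has_resolvable_packing_mult[OF _ gf9_difference_matrix] gf9 nine by (simp add: mult.commute)
    qed
  next
    case three
    then have "coprime t 6" "3 \<le> t"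
      using less.prems by (auto simp: coprime_6_iff) presburger
    then show ?thesis
      using has_resolvable_packing_plane[OF cyclic_difference_matrix[OF \<open>coprime t 6\<close>]]
        card_integer_mod_group three by simp
  next
    case coprime
    then have "coprime m 6"
      using less.prems by (simp add: coprime_6_iff)
    then show ?thesis
      using has_resolvable_packing_mult[OF has_resolvable_packing_1 cyclic_difference_matrix[of m]]
        card_integer_mod_group[OF odd_pos[OF less.prems(1)]] by simp
  qed
qed

theorem theorem2p3:
  fixes n \<rho> :: nat
  assumes "n > 0" and "n mod 6 = 3"
    and "n \<notin> {9, 15, 21, 141, 153, 165, 177, 189, 231, 249, 261, 285, 351, 357}"
    and "1 \<le> \<rho>" and "3 * \<rho> \<le> n"
  shows "\<exists>(X::nat set) B. is_packing (n + \<rho>) 4 X B \<and> finite B \<and>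
           card B = \<rho> * n div 3 + D \<rho> 4 \<and> largest_PPC_size B \<rho>"
proof -
  define m where "m = n div 3"
  have n: "n = 3 * m"
    using assms(2) unfolding m_def by presburger
  have "odd m"
    using assms(2) n by presburger
  moreover have "m \<noteq> 3"
    using assms(3) n by auto
  ultimately have "has_resolvable_packing m"
    by (rule has_resolvable_packing_odd)
  moreover have "\<rho> \<le> m"
    using assms(5) n by simp
  ultimately show ?thesis
    using packing_with_largest_PPC n by simp
qed

end
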